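(* Let $G$ be a nilpotent group of class at most $2$ (so $[G,G]$ is central), let $w=(w_1,\dots,w_l)\in G^l$ be a word of length $l$ over $G$, and let $x\in G$. For $0\le i\le l$ let $w_{\le i}=(w_1,\dots,w_i)$ be the $i$-th prefix of $w$, and set $A=\{[x,\mathrm{val}(w_{\le i})] : 0\le i\le l\}\subseteq[G,G]$. Then for every word $u$ obtained from $w$ by inserting $n$ occurrences of the letter $x$ (at arbitrary positions), we have $\mathrm{val}(u)\in \mathrm{val}(x^nw)\,A^n$. Moreover, if $\mathrm{val}(u)\in\mathrm{val}(x^nw)\,B^n$ for some subset $B\subseteq A$, then there is a word $u'$ obtained from $w$ by inserting $n$ occurrences of $x$ such that these occurrences form at most $|B|$ maximal blocks of consecutive letters $x$ (i.e. powers $x^{c}$), and $\mathrm{val}(u')=\mathrm{val}(u)$.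
   Context: A word over $G$ is a finite sequence of elements of $G$; $\mathrm{val}$ of a word is the product of its letters in $G$ (the empty word has value $1$); $x^nw$ is the word consisting of $n$ letters $x$ followed by $w$. Commutators are taken with the convention $[x,g]=g^{-1}x^{-1}gx$, so that $gx=xg[x,g]$. For a subset $B$ of the abelian group $[G,G]$, $B^n=\{c_1c_2\cdots c_n: c_i\in B\}$, and $gB^n=\{gc: c\in B^n\}$. *)

theory Defs
  imports "HOL-Algebra.Group"
begin

definition commutator :: "('a, 'b) monoid_scheme \<Rightarrow> 'a \<Rightarrow> 'a \<Rightarrow> 'a" where
  "commutator G x g = inv\<^bsub>G\<^esub> g \<otimes>\<^bsub>G\<^esub> inv\<^bsub>G\<^esub> x \<otimes>\<^bsub>G\<^esub> g \<otimes>\<^bsub>G\<^esub> x"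

text \<open>Nilpotent of class at most 2: the commutator subgroup [G,G] is central,
  i.e. every commutator (hence every element of the subgroup they generate)
  commutes with every element.\<close>
definition nilpotent_class_le_2 :: "('a, 'b) monoid_scheme \<Rightarrow> bool" where
  "nilpotent_class_le_2 G \<longleftrightarrow> group G \<and>
     (\<forall>a\<in>carrier G. \<forall>b\<in>carrier G. \<forall>c\<in>carrier G.
        commutator G a b \<otimes>\<^bsub>G\<^esub> c = c \<otimes>\<^bsub>G\<^esub> commutator G a b)"

definition word_val :: "('a, 'b) monoid_scheme \<Rightarrow> 'a list \<Rightarrow> 'a" where
  "word_val G w = foldr (\<lambda>a b. a \<otimes>\<^bsub>G\<^esub> b) w \<one>\<^bsub>G\<^esub>"

definition set_pow :: "('a, 'b) monoid_scheme \<Rightarrow> 'a set \<Rightarrow> nat \<Rightarrow> 'a set" where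
  "set_pow G B n = {word_val G cs | cs. length cs = n \<and> set cs \<subseteq> B}"

definition lcoset_pow :: "('a, 'b) monoid_scheme \<Rightarrow> 'a \<Rightarrow> 'a set \<Rightarrow> nat \<Rightarrow> 'a set" where
  "lcoset_pow G g B n = (\<lambda>c. g \<otimes>\<^bsub>G\<^esub> c) ` set_pow G B n"

definition insertions :: "'a \<Rightarrow> nat \<Rightarrow> 'a list \<Rightarrow> 'a list set" where
  "insertions x n w = shuffles w (replicate n x)"

text \<open>The word x^{c 0} w_1 x^{c 1} w_2 ... w_l x^{c l}, where c i is the number of
  inserted letters x placed right after the prefix of length i.\<close>
definition insert_pattern :: "'a \<Rightarrow> 'a list \<Rightarrow> (nat \<Rightarrow> nat) \<Rightarrow> 'a list" where
  "insert_pattern x w c =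
     concat (map (\<lambda>i. replicate (c i) x @ [w ! i]) [0..<length w]) @ replicate (c (length w)) x"

text \<open>Number of maximal blocks formed by the inserted letters.\<close>
definition num_blocks :: "'a list \<Rightarrow> (nat \<Rightarrow> nat) \<Rightarrow> nat" where
  "num_blocks w c = card {i. i \<le> length w \<and> 0 < c i}"

end

theory Submission
  imports Defs "HOL-Library.Multiset"
begin

text \<open>In a group of class at most 2 all commutators are central, so moving one letter \<open>x\<close>
  from behind the prefix \<open>w\<^sub>\<le>\<^sub>i\<close> to the front of the word multiplies its value by the central
  element \<open>[x, val(w\<^sub>\<le>\<^sub>i)]\<close>. Hence \<open>val(u)\<close> is \<open>val(x\<^sup>n w)\<close> times one element of \<open>A\<close> for each
  inserted letter. Conversely, as these factors commute, any product of \<open>n\<close> elements of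
  \<open>B \<subseteq> A\<close> is realised by putting, for each \<open>b \<in> B\<close>, one block of as many letters \<open>x\<close> as
  there are factors \<open>b\<close> right after a prefix whose commutator with \<open>x\<close> is \<open>b\<close>.\<close>

definition central :: "('a, 'b) monoid_scheme \<Rightarrow> 'a \<Rightarrow> bool" where
  "central G z \<longleftrightarrow> z \<in> carrier G \<and> (\<forall>g\<in>carrier G. z \<otimes>\<^bsub>G\<^esub> g = g \<otimes>\<^bsub>G\<^esub> z)"

lemma word_val_Nil [simp]: "word_val G [] = \<one>\<^bsub>G\<^esub>"
  by (simp add: word_val_def)

lemma word_val_Cons [simp]: "word_val G (a # xs) = a \<otimes>\<^bsub>G\<^esub> word_val G xs"
  by (simp add: word_val_def)

context group
begin

lemma word_val_closed [simp]: "set xs \<subseteq> carrier G \<Longrightarrow> word_val G xs \<in> carrier G"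
  by (induct xs) auto

lemma word_val_append:
  "set xs \<subseteq> carrier G \<Longrightarrow> set ys \<subseteq> carrier G \<Longrightarrow>
    word_val G (xs @ ys) = word_val G xs \<otimes> word_val G ys"
  by (induct xs) (auto simp: m_assoc)

lemma word_val_replicate: "a \<in> carrier G \<Longrightarrow> word_val G (replicate n a) = a [^] n"
  by (induct n) (simp_all add: nat_pow_Suc2[symmetric])

lemma word_val_take_closed [simp]: "set w \<subseteq> carrier G \<Longrightarrow> word_val G (take i w) \<in> carrier G"
  by (meson set_take_subset subset_trans word_val_closed)

lemma central_closed: "central G z \<Longrightarrow> z \<in> carrier G"
  by (simp add: central_def)

lemma central_commute: "central G z \<Longrightarrow> g \<in> carrier G \<Longrightarrow> z \<otimes> g = g \<otimes> z"
  by (simp add: central_def)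

lemma central_one: "central G \<one>"
  by (simp add: central_def)

lemma central_mult:
  assumes a: "central G a" and b: "central G b"
  shows "central G (a \<otimes> b)"
proof -
  have ac: "a \<in> carrier G" and bc: "b \<in> carrier G" using a b by (auto simp: central_def)
  have "a \<otimes> b \<otimes> g = g \<otimes> (a \<otimes> b)" if g: "g \<in> carrier G" for g
  proof -
    have "a \<otimes> b \<otimes> g = a \<otimes> (b \<otimes> g)" using ac bc g by (simp add: m_assoc)
    also have "b \<otimes> g = g \<otimes> b" using b g by (rule central_commute)
    also have "a \<otimes> (g \<otimes> b) = a \<otimes> g \<otimes> b" using ac bc g by (simp add: m_assoc)
    also have "a \<otimes> g = g \<otimes> a" using a g by (rule central_commute)
    finally show ?thesis using ac bc g by (simp add: m_assoc)
  qed
  then show ?thesis using ac bc by (simp add: central_def)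
qed

lemma central_nat_pow: "central G a \<Longrightarrow> central G (a [^] (n::nat))"
  by (induct n) (auto simp: central_one central_mult)

lemma word_val_mset_eq:
  assumes "\<forall>z\<in>set xs. central G z" and "mset xs = mset ys"
  shows "word_val G xs = word_val G ys"
  using assms
proof (induct xs arbitrary: ys)
  case Nil
  then show ?case by simp
next
  case (Cons a xs)
  then have "a \<in> set ys" using mset_eq_setD by fastforce
  then obtain ys1 ys2 where ys: "ys = ys1 @ a # ys2" by (meson split_list)
  have mset_xs: "mset xs = mset (ys1 @ ys2)" using Cons.prems(2) ys by simp
  have ca: "central G a" and cxs: "\<forall>z\<in>set xs. central G z" using Cons.prems(1) by auto
  have c12: "set (ys1 @ ys2) \<subseteq> carrier G"
    using cxs mset_eq_setD[OF mset_xs] by (auto dest: central_closed)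
  have "word_val G ys = word_val G ys1 \<otimes> (a \<otimes> word_val G ys2)"
    using c12 central_closed[OF ca] by (simp add: ys word_val_append)
  also have "\<dots> = a \<otimes> (word_val G ys1 \<otimes> word_val G ys2)"
    using c12 central_closed[OF ca] central_commute[OF ca, of "word_val G ys1"]
    by (simp add: m_assoc[symmetric])
  also have "\<dots> = a \<otimes> word_val G xs"
    using Cons.hyps[OF cxs mset_xs] c12 by (simp add: word_val_append)
  finally show ?case by simp
qed

lemma commutator_closed [simp]:
  "a \<in> carrier G \<Longrightarrow> b \<in> carrier G \<Longrightarrow> commutator G a b \<in> carrier G"
  by (simp add: commutator_def)

lemma commutator_central:
  "nilpotent_class_le_2 G \<Longrightarrow> a \<in> carrier G \<Longrightarrow> b \<in> carrier G \<Longrightarrow> central G (commutator G a b)"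
  unfolding central_def nilpotent_class_le_2_def by auto

lemma mult_eq_commutator_swap:
  assumes g: "g \<in> carrier G" and x: "x \<in> carrier G"
  shows "g \<otimes> x = x \<otimes> g \<otimes> commutator G x g"
  using assms by (simp add: commutator_def m_assoc[symmetric]) (simp add: m_assoc)

lemma mult_nat_pow_eq_commutator_swap:
  assumes g: "g \<in> carrier G" and x: "x \<in> carrier G" and z: "central G (commutator G x g)"
  shows "g \<otimes> x [^] (m::nat) = x [^] m \<otimes> g \<otimes> commutator G x g [^] m"
proof (induct m)
  case 0
  then show ?case using g by simp
next
  case (Suc m)
  define z where "z = commutator G x g"
  have zc: "z \<in> carrier G" using g x by (simp add: z_def)
  have "g \<otimes> x [^] Suc m = (g \<otimes> x [^] m) \<otimes> x" using g x by (simp add: m_assoc)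
  also have "\<dots> = x [^] m \<otimes> g \<otimes> (z [^] m \<otimes> x)" using Suc g x zc by (simp add: m_assoc z_def)
  also have "z [^] m \<otimes> x = x \<otimes> z [^] m"
    using central_nat_pow[OF z] x by (simp add: central_commute z_def)
  also have "x [^] m \<otimes> g \<otimes> (x \<otimes> z [^] m) = x [^] m \<otimes> (g \<otimes> x) \<otimes> z [^] m"
    using g x zc by (simp add: m_assoc)
  also have "g \<otimes> x = x \<otimes> g \<otimes> z" using mult_eq_commutator_swap[OF g x] by (simp add: z_def)
  also have "x [^] m \<otimes> (x \<otimes> g \<otimes> z) \<otimes> z [^] m = (x [^] m \<otimes> x) \<otimes> g \<otimes> (z \<otimes> z [^] m)"
    using g x zc by (simp add: m_assoc)
  also have "x [^] m \<otimes> x = x [^] Suc m" by simp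
  also have "z \<otimes> z [^] m = z [^] Suc m" by (rule nat_pow_Suc2[symmetric, OF zc])
  finally show ?case by (simp add: z_def)
qed

end

lemma insert_pattern_Nil: "insert_pattern x [] c = replicate (c 0) x"
  by (simp add: insert_pattern_def)

lemma insert_pattern_Cons:
  "insert_pattern x (a # w) c = replicate (c 0) x @ a # insert_pattern x w (\<lambda>i. c (Suc i))"
proof -
  have "[0..<length (a # w)] = 0 # map Suc [0..<length w]"
    by (simp add: upt_conv_Cons map_Suc_upt del: upt_Suc)
  then show ?thesis by (simp add: insert_pattern_def o_def)
qed

lemma insert_pattern_Suc_first_block:
  "insert_pattern x w (c(0 := Suc (c 0))) = x # insert_pattern x w c"
  by (cases w) (simp_all add: insert_pattern_Nil insert_pattern_Cons)

lemma set_insert_pattern: "set (insert_pattern x w c) \<subseteq> insert x (set w)"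
  by (auto simp: insert_pattern_def dest: nth_mem)

lemma insertions_imp_insert_pattern:
  "u \<in> insertions x n w \<Longrightarrow> \<exists>c. (\<Sum>i\<le>length w. c i) = n \<and> u = insert_pattern x w c"
  unfolding insertions_def
proof (induct u arbitrary: w n)
  case Nil
  then show ?case by (intro exI[of _ "\<lambda>_. 0"]) (simp add: insert_pattern_Nil)
next
  case (Cons z zs)
  from Cons.prems[unfolded Cons_in_shuffles_iff] show ?case
  proof
    assume "w \<noteq> [] \<and> hd w = z \<and> zs \<in> shuffles (tl w) (replicate n x)"
    then obtain w' where w: "w = z # w'" and zs: "zs \<in> shuffles w' (replicate n x)"
      by (cases w) auto
    from Cons.hyps[OF zs] obtain c where c: "(\<Sum>i\<le>length w'. c i) = n" "zs = insert_pattern x w' c"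
      by blast
    define c' where "c' i = (case i of 0 \<Rightarrow> 0 | Suc k \<Rightarrow> c k)" for i
    have "(\<Sum>i\<le>length w. c' i) = n"
      using c(1) by (simp only: w length_Cons sum.atMost_Suc_shift) (simp add: c'_def)
    then show ?thesis using c w by (intro exI[of _ c']) (simp add: insert_pattern_Cons c'_def)
  next
    assume "replicate n x \<noteq> [] \<and> hd (replicate n x) = z \<and> zs \<in> shuffles w (tl (replicate n x))"
    then obtain m where n: "n = Suc m" and z: "z = x" and zs: "zs \<in> shuffles w (replicate m x)"
      by (cases n) auto
    from Cons.hyps[OF zs] obtain c where c: "(\<Sum>i\<le>length w. c i) = m" "zs = insert_pattern x w c"
      by blast
    have "(\<Sum>i\<le>length w. (c(0 := Suc (c 0))) i) = n" using c(1) n by (simp add: sum.atMost_shift)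
    then show ?thesis using c z insert_pattern_Suc_first_block by metis
  qed
qed

text \<open>The commutators picked up when the inserted letters of \<open>insert_pattern x w c\<close> are moved
  to the front of the word; \<open>p\<close> is the value of whatever stands before the word, which the
  induction over \<open>w\<close> needs.\<close>
definition prefix_commutators ::
    "('a, 'b) monoid_scheme \<Rightarrow> 'a \<Rightarrow> 'a \<Rightarrow> 'a list \<Rightarrow> (nat \<Rightarrow> nat) \<Rightarrow> 'a list" where
  "prefix_commutators G x p w c =
     concat (map (\<lambda>i. replicate (c i) (commutator G x (p \<otimes>\<^bsub>G\<^esub> word_val G (take i w))))
       [0..<Suc (length w)])"

lemma length_prefix_commutators: "length (prefix_commutators G x p w c) = (\<Sum>i\<le>length w. c i)"
  by (simp add: prefix_commutators_def length_concat o_def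
      interv_sum_list_conv_sum_set_nat atLeast0LessThan lessThan_Suc_atMost del: upt_Suc)

lemma set_prefix_commutators:
  "set (prefix_commutators G x p w c) \<subseteq>
     {commutator G x (p \<otimes>\<^bsub>G\<^esub> word_val G (take i w)) | i. i \<le> length w}"
  by (auto simp: prefix_commutators_def less_Suc_eq_le simp del: upt_Suc)

lemma mset_prefix_commutators:
  "mset (prefix_commutators G x p w c) =
     (\<Sum>i\<le>length w. replicate_mset (c i) (commutator G x (p \<otimes>\<^bsub>G\<^esub> word_val G (take i w))))"
  by (simp add: prefix_commutators_def mset_concat o_def interv_sum_list_conv_sum_set_nat
      atLeast0LessThan lessThan_Suc_atMost del: upt_Suc)

lemma mset_prefix_commutators_increment:
  assumes "j \<le> length w"
  shows "mset (prefix_commutators G x p w (c(j := Suc (c j)))) =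
    add_mset (commutator G x (p \<otimes>\<^bsub>G\<^esub> word_val G (take j w))) (mset (prefix_commutators G x p w c))"
proof -
  let ?f = "\<lambda>c i. replicate_mset (c i) (commutator G x (p \<otimes>\<^bsub>G\<^esub> word_val G (take i w)))"
  have "(\<Sum>i\<le>length w. ?f (c(j := Suc (c j))) i) =
      ?f (c(j := Suc (c j))) j + (\<Sum>i\<in>{..length w} - {j}. ?f c i)"
    using assms by (simp add: sum.remove)
  also have "\<dots> = add_mset (commutator G x (p \<otimes>\<^bsub>G\<^esub> word_val G (take j w))) (\<Sum>i\<le>length w. ?f c i)"
    using assms by (simp add: sum.remove[of _ j])
  finally show ?thesis by (simp add: mset_prefix_commutators)
qed

context group
begin

lemma prefix_commutators_Cons:
  assumes "p \<in> carrier G" "a \<in> carrier G" "set w \<subseteq> carrier G"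
  shows "prefix_commutators G x p (a # w) c =
    replicate (c 0) (commutator G x p) @ prefix_commutators G x (p \<otimes> a) w (\<lambda>i. c (Suc i))"
proof -
  have "[0..<Suc (length (a # w))] = 0 # map Suc [0..<Suc (length w)]"
    by (subst upt_conv_Cons) (simp_all add: map_Suc_upt del: upt_Suc)
  then show ?thesis using assms by (simp add: prefix_commutators_def o_def m_assoc del: upt_Suc)
qed

lemma set_prefix_commutators_carrier:
  "x \<in> carrier G \<Longrightarrow> p \<in> carrier G \<Longrightarrow> set w \<subseteq> carrier G \<Longrightarrow>
    set (prefix_commutators G x p w c) \<subseteq> carrier G"
  using set_prefix_commutators[of G x p w c] by auto

lemma mult_word_val_insert_pattern:
  assumes nil: "nilpotent_class_le_2 G" and x: "x \<in> carrier G"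
  shows "p \<in> carrier G \<Longrightarrow> set w \<subseteq> carrier G \<Longrightarrow>
    p \<otimes> word_val G (insert_pattern x w c) =
    x [^] (\<Sum>i\<le>length w. c i) \<otimes> (p \<otimes> word_val G w) \<otimes> word_val G (prefix_commutators G x p w c)"
proof (induct w arbitrary: p c)
  case Nil
  then show ?case
    using x mult_nat_pow_eq_commutator_swap[OF Nil(1) x commutator_central[OF nil x Nil(1)]]
    by (simp add: insert_pattern_Nil prefix_commutators_def word_val_replicate)
next
  case (Cons a w)
  have p: "p \<in> carrier G" and a: "a \<in> carrier G" and w: "set w \<subseteq> carrier G"
    using Cons.prems by auto
  define z where "z = commutator G x p [^] c 0"
  have z: "central G z" unfolding z_def using commutator_central[OF nil x p] by (rule central_nat_pow)
  have zc: "z \<in> carrier G" using z by (rule central_closed)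
  define V where "V = word_val G (insert_pattern x w (\<lambda>i. c (Suc i)))"
  have Vc: "V \<in> carrier G" unfolding V_def using set_insert_pattern[of x w] x w by (intro word_val_closed) blast
  define C where "C = word_val G (prefix_commutators G x (p \<otimes> a) w (\<lambda>i. c (Suc i)))"
  have Cc: "C \<in> carrier G" unfolding C_def using set_prefix_commutators_carrier x p a w by simp
  define S where "S = (\<Sum>i\<le>length w. c (Suc i))"
  have wc: "word_val G w \<in> carrier G" using w by simp
  have IH: "(p \<otimes> a) \<otimes> V = x [^] S \<otimes> (p \<otimes> a \<otimes> word_val G w) \<otimes> C"
    using Cons.hyps[of "p \<otimes> a" "\<lambda>i. c (Suc i)"] p a w by (simp add: V_def C_def S_def)
  have "p \<otimes> word_val G (insert_pattern x (a # w) c) = p \<otimes> (x [^] c 0 \<otimes> (a \<otimes> V))"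
    unfolding insert_pattern_Cons V_def using x a w set_insert_pattern[of x w]
    by (subst word_val_append) (auto simp: word_val_replicate)
  also have "\<dots> = (p \<otimes> x [^] c 0) \<otimes> (a \<otimes> V)" using p x a Vc by (simp add: m_assoc)
  also have "p \<otimes> x [^] c 0 = x [^] c 0 \<otimes> p \<otimes> z"
    unfolding z_def using mult_nat_pow_eq_commutator_swap[OF p x commutator_central[OF nil x p]] .
  also have "x [^] c 0 \<otimes> p \<otimes> z \<otimes> (a \<otimes> V) = x [^] c 0 \<otimes> (p \<otimes> (z \<otimes> (a \<otimes> V)))"
    using p x a Vc zc by (simp add: m_assoc)
  also have "z \<otimes> (a \<otimes> V) = (a \<otimes> V) \<otimes> z" using z a Vc by (intro central_commute) auto
  also have "p \<otimes> ((a \<otimes> V) \<otimes> z) = ((p \<otimes> a) \<otimes> V) \<otimes> z" using p a Vc zc by (simp add: m_assoc)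
  also note IH
  also have "x [^] c 0 \<otimes> (x [^] S \<otimes> (p \<otimes> a \<otimes> word_val G w) \<otimes> C \<otimes> z) =
      (x [^] c 0 \<otimes> x [^] S) \<otimes> (p \<otimes> (a \<otimes> word_val G w)) \<otimes> (C \<otimes> z)"
    using p a x wc Cc zc by (simp add: m_assoc)
  also have "C \<otimes> z = z \<otimes> C" using z Cc by (intro central_commute[symmetric])
  also have "x [^] c 0 \<otimes> x [^] S = x [^] (\<Sum>i\<le>length (a # w). c i)"
    using x by (simp add: nat_pow_mult S_def sum.atMost_Suc_shift del: sum.atMost_Suc)
  also have "z \<otimes> C = word_val G (prefix_commutators G x p (a # w) c)"
    unfolding z_def C_def using p a w x set_prefix_commutators_carrier[of x "p \<otimes> a" w]
    by (simp add: prefix_commutators_Cons) (subst word_val_append, auto simp: word_val_replicate)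
  finally show ?case by simp
qed

lemma word_val_insert_pattern:
  assumes nil: "nilpotent_class_le_2 G" and x: "x \<in> carrier G" and w: "set w \<subseteq> carrier G"
  shows "word_val G (insert_pattern x w c) =
    word_val G (replicate (\<Sum>i\<le>length w. c i) x @ w) \<otimes> word_val G (prefix_commutators G x \<one> w c)"
proof -
  let ?S = "\<Sum>i\<le>length w. c i"
  have "set (insert_pattern x w c) \<subseteq> carrier G" using set_insert_pattern[of x w c] x w by blast
  then have "word_val G (insert_pattern x w c) = \<one> \<otimes> word_val G (insert_pattern x w c)" by simp
  also have "\<dots> = x [^] ?S \<otimes> word_val G w \<otimes> word_val G (prefix_commutators G x \<one> w c)"
    using mult_word_val_insert_pattern[OF nil x one_closed w, of c] w by simp
  also have "x [^] ?S \<otimes> word_val G w = word_val G (replicate ?S x @ w)"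
    using x w by (subst word_val_append) (auto simp: word_val_replicate)
  finally show ?thesis .
qed

lemma set_prefix_commutators_one:
  "set w \<subseteq> carrier G \<Longrightarrow>
    set (prefix_commutators G x \<one> w c) \<subseteq> {commutator G x (word_val G (take i w)) | i. i \<le> length w}"
  using set_prefix_commutators[of G x \<one> w c] by simp

lemma word_val_insertions_mem_lcoset_pow:
  assumes nil: "nilpotent_class_le_2 G" and x: "x \<in> carrier G" and w: "set w \<subseteq> carrier G"
    and u: "u \<in> insertions x n w"
  shows "word_val G u \<in> lcoset_pow G (word_val G (replicate n x @ w))
    {commutator G x (word_val G (take i w)) | i. i \<le> length w} n"
proof -
  obtain c where n: "(\<Sum>i\<le>length w. c i) = n" and u: "u = insert_pattern x w c"
    using insertions_imp_insert_pattern[OF u] by blast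
  let ?cs = "prefix_commutators G x \<one> w c"
  have "length ?cs = n" using n by (simp add: length_prefix_commutators)
  then have "word_val G ?cs \<in> set_pow G {commutator G x (word_val G (take i w)) | i. i \<le> length w} n"
    unfolding set_pow_def using set_prefix_commutators_one[OF w] by blast
  moreover have "word_val G u = word_val G (replicate n x @ w) \<otimes> word_val G ?cs"
    using word_val_insert_pattern[OF nil x w] by (simp add: u n)
  ultimately show ?thesis unfolding lcoset_pow_def by blast
qed

lemma exists_prefix_commutators_word_val_eq:
  assumes nil: "nilpotent_class_le_2 G" and x: "x \<in> carrier G" and w: "set w \<subseteq> carrier G"
    and idx: "\<forall>b\<in>set cs. idx b \<le> length w \<and> commutator G x (word_val G (take (idx b) w)) = b"
  shows "\<exists>c. (\<Sum>i\<le>length w. c i) = length cs \<and> {i. i \<le> length w \<and> 0 < c i} \<subseteq> idx ` set cs \<and>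
    word_val G (prefix_commutators G x \<one> w c) = word_val G cs"
  using idx
proof (induct cs)
  case Nil
  have "prefix_commutators G x \<one> w (\<lambda>_. 0) = []"
    using length_prefix_commutators[of G x \<one> w "\<lambda>_. 0"] by simp
  then show ?case by (intro exI[of _ "\<lambda>_. 0"]) simp
next
  case (Cons b cs)
  then obtain c where sum_c: "(\<Sum>i\<le>length w. c i) = length cs"
    and blocks_c: "{i. i \<le> length w \<and> 0 < c i} \<subseteq> idx ` set cs"
    and val_c: "word_val G (prefix_commutators G x \<one> w c) = word_val G cs"
    by auto
  define j where "j = idx b"
  have j: "j \<le> length w" and b: "commutator G x (word_val G (take j w)) = b"
    using Cons.prems by (auto simp: j_def)
  define c' where "c' = c(j := Suc (c j))"
  have "(\<Sum>i\<le>length w. c' i) = c' j + (\<Sum>i\<in>{..length w} - {j}. c i)"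
    using j by (simp add: c'_def sum.remove)
  also have "\<dots> = Suc (\<Sum>i\<le>length w. c i)"
    using j by (simp add: c'_def sum.remove[of _ j])
  finally have sum_c': "(\<Sum>i\<le>length w. c' i) = length (b # cs)" using sum_c by simp
  have blocks_c': "{i. i \<le> length w \<and> 0 < c' i} \<subseteq> idx ` set (b # cs)"
    using blocks_c by (auto simp: c'_def j_def)
  have "mset (prefix_commutators G x \<one> w c') = mset (b # prefix_commutators G x \<one> w c)"
    using mset_prefix_commutators_increment[OF j, of G x \<one> c] w b by (simp add: c'_def)
  moreover have "\<forall>z\<in>set (prefix_commutators G x \<one> w c'). central G z"
    using set_prefix_commutators_one[OF w, of x c'] w by (auto intro!: commutator_central[OF nil x])
  ultimately have "word_val G (prefix_commutators G x \<one> w c') = word_val G (b # prefix_commutators G x \<one> w c)"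
    by (intro word_val_mset_eq)
  then have "word_val G (prefix_commutators G x \<one> w c') = b \<otimes> word_val G cs"
    using val_c by simp
  then show ?case using sum_c' blocks_c' by auto
qed

lemma lcoset_pow_mem_imp_block_pattern:
  assumes nil: "nilpotent_class_le_2 G" and x: "x \<in> carrier G" and w: "set w \<subseteq> carrier G"
    and B: "B \<subseteq> {commutator G x (word_val G (take i w)) | i. i \<le> length w}"
    and u: "word_val G u \<in> lcoset_pow G (word_val G (replicate n x @ w)) B n"
  shows "\<exists>c. (\<Sum>i\<le>length w. c i) = n \<and> num_blocks w c \<le> card B \<and>
    word_val G (insert_pattern x w c) = word_val G u"
proof -
  obtain cs where n: "length cs = n" and cs: "set cs \<subseteq> B"
    and val_u: "word_val G u = word_val G (replicate n x @ w) \<otimes> word_val G cs"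
    using u unfolding lcoset_pow_def set_pow_def by auto
  have "\<forall>b\<in>B. \<exists>i. i \<le> length w \<and> commutator G x (word_val G (take i w)) = b"
    using B by blast
  then obtain idx where idx: "\<forall>b\<in>B. idx b \<le> length w \<and> commutator G x (word_val G (take (idx b) w)) = b"
    by (metis bchoice)
  then obtain c where sum_c: "(\<Sum>i\<le>length w. c i) = n"
    and blocks: "{i. i \<le> length w \<and> 0 < c i} \<subseteq> idx ` set cs"
    and val_c: "word_val G (prefix_commutators G x \<one> w c) = word_val G cs"
    using exists_prefix_commutators_word_val_eq[OF nil x w, of cs idx] cs n by auto
  have "finite B"
    using B by (rule finite_subset) (simp add: setcompr_eq_image)
  then have "num_blocks w c \<le> card B"
    unfolding num_blocks_def using blocks cs
    by (meson card_image_le card_mono finite_imageI finite_subset order_trans)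
  moreover have "word_val G (insert_pattern x w c) = word_val G u"
    using word_val_insert_pattern[OF nil x w, of c] by (simp add: sum_c val_c val_u)
  ultimately show ?thesis using sum_c by blast
qed

end

theorem mainTheorem4:
  fixes G :: "('a, 'b) monoid_scheme" and w :: "'a list" and x :: 'a
  assumes nil: "nilpotent_class_le_2 G"
    and w_carrier: "set w \<subseteq> carrier G"
    and x_carrier: "x \<in> carrier G"
  defines "A \<equiv> {commutator G x (word_val G (take i w)) | i. i \<le> length w}"
  shows "(\<forall>n u. u \<in> insertions x n w \<longrightarrow>
            word_val G u \<in> lcoset_pow G (word_val G (replicate n x @ w)) A n)
       \<and> (\<forall>n u B. u \<in> insertions x n w \<longrightarrow> B \<subseteq> A \<longrightarrow>
            word_val G u \<in> lcoset_pow G (word_val G (replicate n x @ w)) B n \<longrightarrow>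
            (\<exists>c. (\<Sum>i\<le>length w. c i) = n \<and> num_blocks w c \<le> card B \<and>
                 word_val G (insert_pattern x w c) = word_val G u))"
proof -
  interpret group G using nil by (simp add: nilpotent_class_le_2_def)
  show ?thesis
    unfolding A_def
    using word_val_insertions_mem_lcoset_pow[OF nil x_carrier w_carrier]
      lcoset_pow_mem_imp_block_pattern[OF nil x_carrier w_carrier]
    by blast
qed

end
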